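(* Let $H\in(0,1/2)$, $\lambda,\theta>0$, $a\neq0$, let $$R_Y(\tau)=\theta^2\Big(\frac{\Gamma(2H+1)\cosh(\lambda\tau)}{2\lambda^{2H}}-H\int_0^\tau\cosh(\lambda(\tau-u))\,u^{2H-1}\,\mathsf{d}u\Big),\qquad\tau\ge0,$$ and $R_{Z^{(a)}}(\tau)=\exp(a^2R_Y(0))\big(\exp(a^2R_Y(\tau))-1\big)$, $\tau\ge0$. Then $R_{Z^{(a)}}\in\mathcal{C}^\infty((0,\infty);\mathbb{R})$ and $$R_{Z^{(a)}}(\tau)=c_0-c_1\tau^{2H}+o(\tau^{2H}),\qquad\tau\to0,$$ with $c_0=\exp(a^2R_Y(0))\big(\exp(a^2R_Y(0))-1\big)$ and $c_1=\frac{a^2\theta^2}{2}\exp(2a^2R_Y(0))$.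
   Context: $R_Y$ is the covariance function of the stationary fractional Ornstein–Uhlenbeck process $Y_t=\mu+\theta e^{-\lambda t}\int_{-\infty}^te^{\lambda s}\,\mathsf{d}B_s$ (with $B$ a fractional Brownian motion of Hurst parameter $H$), and $R_{Z^{(a)}}$ is the covariance function of the stationary process $Z^{(a)}_t=e^{a(Y_t-\mu)}$, i.e. $\mathrm{Cov}(Z^{(a)}_s,Z^{(a)}_t)=R_{Z^{(a)}}(|t-s|)$. *)

theory Defs
  imports "HOL-Analysis.Analysis" "HOL-Library.Landau_Symbols"
begin

definition R_Y :: "real \<Rightarrow> real \<Rightarrow> real \<Rightarrow> real \<Rightarrow> real" where
  "R_Y H lam \<theta> \<tau> = \<theta>\<^sup>2 * (Gamma (2*H + 1) * cosh (lam * \<tau>) / (2 * lam powr (2*H))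
      - H * (LBINT u=0..\<tau>. cosh (lam * (\<tau> - u)) * u powr (2*H - 1)))"

definition R_Z :: "real \<Rightarrow> real \<Rightarrow> real \<Rightarrow> real \<Rightarrow> real \<Rightarrow> real" where
  "R_Z H lam \<theta> a \<tau> = exp (a\<^sup>2 * R_Y H lam \<theta> 0) * (exp (a\<^sup>2 * R_Y H lam \<theta> \<tau>) - 1)"

end

theory Submission
  imports Defs "HOL-Real_Asymp.Real_Asymp"
begin

text \<open>
  By the addition formula for cosh, on \<open>(0, \<infinity>)\<close> the covariance \<open>R_Y\<close> is a polynomial in
  \<open>cosh (lam * \<tau>)\<close>, \<open>sinh (lam * \<tau>)\<close> and the primitives of \<open>cosh (lam * u) * u powr (2*H - 1)\<close>
  and \<open>sinh (lam * u) * u powr (2*H - 1)\<close>. The algebra generated by such functions and closed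
  under \<open>exp\<close> is closed under differentiation on \<open>(0, \<infinity>)\<close>, so \<open>R_Z\<close> is smooth there.

  At \<open>0\<close>, removing \<open>\<integral>\<^sub>0\<^sup>\<tau> u powr (2*H - 1) du = \<tau> powr (2*H) / (2*H)\<close> from the integral in
  \<open>R_Y\<close> leaves a remainder of size at most \<open>(cosh (lam * \<tau>) - 1) * \<tau> powr (2*H) / (2*H)\<close>,
  whence \<open>R_Y \<tau> = R_Y 0 - \<theta>\<^sup>2/2 * \<tau> powr (2*H) + o(\<tau> powr (2*H))\<close>; the expansion
  \<open>exp (c + d) = exp c * (1 + d + O(d\<^sup>2))\<close> carries this over to \<open>R_Z\<close>.
\<close>

lemma abs_exp_minus_one_minus_le_square:
  fixes x :: real
  assumes "\<bar>x\<bar> \<le> 1"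
  shows "\<bar>exp x - 1 - x\<bar> \<le> x\<^sup>2"
proof -
  have lower: "0 \<le> exp x - 1 - x"
    using exp_ge_add_one_self[of x] by linarith
  have upper: "exp x \<le> 1 + x + x\<^sup>2"
  proof (cases "x \<ge> 0")
    case True
    then show ?thesis using exp_bound assms by auto
  next
    case False
    have "1 - x \<le> exp (-x)"
      using exp_ge_add_one_self[of "-x"] by simp
    then have "exp x \<le> 1 / (1 - x)"
      using False by (simp add: exp_minus field_simps)
    also have "\<dots> \<le> 1 + x + x\<^sup>2"
      using False mult_nonpos_nonneg[of x "x*x"] by (simp add: field_simps power2_eq_square)
    finally show ?thesis .
  qed
  show ?thesis using lower upper by simp
qed

lemma exp_minus_one_minus_smallo:
  fixes d g :: "'a \<Rightarrow> real"
  assumes d_big: "d \<in> O[F](g)" and d_lim: "(d \<longlongrightarrow> 0) F"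
  shows "(\<lambda>x. exp (d x) - 1 - d x) \<in> o[F](g)"
proof -
  have "((\<lambda>x. \<bar>d x\<bar>) \<longlongrightarrow> 0) F"
    using tendsto_rabs_zero[OF d_lim] .
  then have "eventually (\<lambda>x. \<bar>d x\<bar> < 1) F"
    using order_tendstoD(2) zero_less_one by blast
  then have "eventually (\<lambda>x. norm (exp (d x) - 1 - d x) \<le> 1 * norm (d x * d x)) F"
  proof eventually_elim
    case (elim x)
    then show ?case
      using abs_exp_minus_one_minus_le_square[of "d x"] by (simp add: power2_eq_square abs_mult)
  qed
  then have "(\<lambda>x. exp (d x) - 1 - d x) \<in> O[F](\<lambda>x. d x * d x)"
    by (rule bigoI)
  moreover have "d \<in> o[F](\<lambda>_. 1)"
    using d_lim by (intro smalloI_tendsto) auto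
  then have "(\<lambda>x. d x * d x) \<in> o[F](g)"
    using landau_o.big_small_mult[OF d_big, of d "\<lambda>_. 1"] by simp
  ultimately show ?thesis
    by (rule landau_o.big_small_trans)
qed

lemma exp_smallo_expansion:
  fixes f g :: "'a \<Rightarrow> real"
  assumes f: "(\<lambda>x. f x - (c - b * g x)) \<in> o[F](g)" and g: "(g \<longlongrightarrow> 0) F"
  shows "(\<lambda>x. exp (f x) - (exp c - b * exp c * g x)) \<in> o[F](g)"
proof -
  define d where "d x = f x - c" for x
  have "d = (\<lambda>x. (f x - (c - b * g x)) - b * g x)"
    by (auto simp: d_def)
  also have "\<dots> \<in> O[F](g)"
    by (rule sum_in_bigo(2)[OF landau_o.small_imp_big[OF f]]) simp
  finally have d_big: "d \<in> O[F](g)" .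
  have "g \<in> o[F](\<lambda>_. 1)"
    using g by (intro smalloI_tendsto) auto
  then have "(d \<longlongrightarrow> 0) F"
    using smalloD_tendsto[OF landau_o.big_small_trans[OF d_big, of "\<lambda>_. 1"]] by simp
  with d_big have "(\<lambda>x. (exp (d x) - 1 - d x) + (f x - (c - b * g x))) \<in> o[F](g)"
    by (intro sum_in_smallo(1)[OF exp_minus_one_minus_smallo f])
  then have remainder_small:
    "(\<lambda>x. exp c * ((exp (d x) - 1 - d x) + (f x - (c - b * g x)))) \<in> o[F](g)"
    by (simp only: landau_o.small.cmult_in_iff exp_not_eq_zero not_False_eq_True)
  have "exp (f x) - (exp c - b * exp c * g x)
      = exp c * ((exp (d x) - 1 - d x) + (f x - (c - b * g x)))" for x
  proof -
    have "exp (f x) = exp c * exp (d x)"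
      by (simp add: d_def flip: exp_add)
    then show ?thesis
      by (simp add: d_def algebra_simps)
  qed
  with remainder_small show ?thesis
    by (simp only:)
qed

lemma absolutely_integrable_on_mult_powr:
  fixes g :: "real \<Rightarrow> real"
  assumes g: "continuous_on {0..t} g" and p: "p > -1" and t: "0 \<le> t"
  shows "(\<lambda>x. g x * x powr p) absolutely_integrable_on {0..t}"
proof -
  have "g \<in> borel_measurable (lebesgue_on {0..t})"
    by (rule continuous_imp_measurable_on_sets_lebesgue[OF g]) simp
  moreover have "bounded (g ` {0..t})"
    by (intro compact_imp_bounded compact_continuous_image g compact_Icc)
  moreover have "(\<lambda>x. x powr p) absolutely_integrable_on {0..t}"
    by (rule nonnegative_absolutely_integrable_1[OF integrable_on_powr_from_0[OF p t]]) simp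
  ultimately show ?thesis
    by (intro absolutely_integrable_bounded_measurable_product_real) simp_all
qed

lemma integrable_on_mult_powr:
  fixes g :: "real \<Rightarrow> real"
  assumes "continuous_on {0..t} g" "p > -1" "0 \<le> t"
  shows "(\<lambda>x. g x * x powr p) integrable_on {0..t}"
  using absolutely_integrable_on_mult_powr[OF assms] set_lebesgue_integral_eq_integral(1) by blast

lemma interval_integral_mult_powr:
  fixes g :: "real \<Rightarrow> real"
  assumes g: "continuous_on UNIV g" and p: "p > -1" and t: "0 \<le> t"
  shows "(LBINT x=0..t. g x * x powr p) = integral {0..t} (\<lambda>x. g x * x powr p)"
proof -
  have "(\<lambda>x::real. x powr p) \<in> borel_measurable borel"
    by (intro powr_real_measurable measurable_ident_sets measurable_const) auto
  then have "(\<lambda>x. g x * x powr p) \<in> borel_measurable borel"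
    by (rule borel_measurable_times[OF borel_measurable_continuous_onI[OF g]])
  then have "(\<lambda>x. indicator {0..t} x *\<^sub>R (g x * x powr p)) \<in> borel_measurable lborel"
    unfolding measurable_lborel2 by (intro borel_measurable_scaleR) auto
  then have "set_integrable lborel {0..t} (\<lambda>x. g x * x powr p)"
    using absolutely_integrable_on_mult_powr[OF continuous_on_subset[OF g subset_UNIV] p t]
    unfolding set_integrable_def by (simp only: integrable_completion)
  then show ?thesis
    unfolding zero_ereal_def by (rule interval_integral_eq_integral[OF t])
qed

lemma has_real_derivative_integral_mult_powr:
  fixes g :: "real \<Rightarrow> real"
  assumes g: "continuous_on UNIV g" and p: "p > -1" and x: "x > 0"
  shows "((\<lambda>y. integral {0..y} (\<lambda>u. g u * u powr p)) has_real_derivative g x * x powr p) (at x)"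
proof -
  define F where "F u = g u * u powr p" for u
  have "continuous_on {x/2..2*x} F"
    unfolding F_def using x by (intro continuous_intros continuous_on_subset[OF g]) auto
  then have "((\<lambda>y. integral {x/2..y} F) has_real_derivative F x) (at x within {x/2..2*x})"
    by (rule integral_has_real_derivative) (use x in auto)
  moreover have "at x within {x/2..2*x} = at x"
    by (rule at_within_interior) (use x in auto)
  ultimately have "((\<lambda>y. integral {0..x/2} F + integral {x/2..y} F) has_real_derivative F x) (at x)"
    using DERIV_add[OF DERIV_const] by fastforce
  moreover have "integral {0..x/2} F + integral {x/2..y} F = integral {0..y} F"
    if "y \<in> {x/2<..<2*x}" for y
    using integrable_on_mult_powr[OF continuous_on_subset[OF g] p, of y] that x
      Henstock_Kurzweil_Integration.integral_combine[of 0 "x/2" y F]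
    unfolding F_def by auto
  ultimately show ?thesis
    using has_field_derivative_transform_within_open[of _ "F x" x "{x/2<..<2*x}"] x
    unfolding F_def by auto
qed

definition deriv_closed_on :: "real set \<Rightarrow> (real \<Rightarrow> real) set \<Rightarrow> bool" where
  "deriv_closed_on U S \<longleftrightarrow> (\<forall>f\<in>S. \<exists>f'\<in>S. \<forall>x\<in>U. (f has_real_derivative f' x) (at x))"

lemma deriv_closed_on_higher_deriv:
  assumes S: "deriv_closed_on U S" and U: "open U"
    and f: "f0 \<in> S" "\<forall>x\<in>U. f x = f0 x"
  shows "\<exists>g\<in>S. \<forall>x\<in>U. (deriv ^^ k) f x = g x"
proof (induction k)
  case 0
  show ?case using f by auto
next
  case (Suc k)
  then obtain g where g: "g \<in> S" "\<forall>x\<in>U. (deriv ^^ k) f x = g x" by blast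
  then obtain g' where g': "g' \<in> S" "\<forall>x\<in>U. (g has_real_derivative g' x) (at x)"
    using S unfolding deriv_closed_on_def by blast
  have "((deriv ^^ k) f has_real_derivative g' x) (at x)" if "x \<in> U" for x
    using has_field_derivative_transform_within_open[of g "g' x" x U] g g' U that by auto
  then have "\<forall>x\<in>U. (deriv ^^ Suc k) f x = g' x"
    by (simp add: DERIV_imp_deriv)
  then show ?case using g' by blast
qed

lemma deriv_closed_on_higher_deriv_differentiable:
  assumes S: "deriv_closed_on U S" and U: "open U"
    and f: "f0 \<in> S" "\<forall>x\<in>U. f x = f0 x" and x: "x \<in> U"
  shows "(deriv ^^ k) f differentiable (at x)"
proof -
  obtain g where g: "g \<in> S" "\<forall>x\<in>U. (deriv ^^ k) f x = g x"
    using deriv_closed_on_higher_deriv[OF S U f] by blast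
  then obtain g' where "\<forall>x\<in>U. (g has_real_derivative g' x) (at x)"
    using S unfolding deriv_closed_on_def by blast
  then have "((deriv ^^ k) f has_real_derivative g' x) (at x)"
    using has_field_derivative_transform_within_open[of g "g' x" x U] g U x by auto
  then show ?thesis
    using real_differentiable_def by blast
qed

inductive_set hyperbolic_powr_fun :: "(real \<Rightarrow> real) set" where
  const: "(\<lambda>x. c) \<in> hyperbolic_powr_fun"
| powr: "(\<lambda>x. x powr p) \<in> hyperbolic_powr_fun"
| cosh: "(\<lambda>x. cosh (l * x)) \<in> hyperbolic_powr_fun"
| sinh: "(\<lambda>x. sinh (l * x)) \<in> hyperbolic_powr_fun"
| integral_cosh:
    "p > -1 \<Longrightarrow> (\<lambda>x. integral {0..x} (\<lambda>u. cosh (l * u) * u powr p)) \<in> hyperbolic_powr_fun"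
| integral_sinh:
    "p > -1 \<Longrightarrow> (\<lambda>x. integral {0..x} (\<lambda>u. sinh (l * u) * u powr p)) \<in> hyperbolic_powr_fun"
| add: "f \<in> hyperbolic_powr_fun \<Longrightarrow> g \<in> hyperbolic_powr_fun \<Longrightarrow> (\<lambda>x. f x + g x) \<in> hyperbolic_powr_fun"
| mult: "f \<in> hyperbolic_powr_fun \<Longrightarrow> g \<in> hyperbolic_powr_fun \<Longrightarrow> (\<lambda>x. f x * g x) \<in> hyperbolic_powr_fun"
| exp: "f \<in> hyperbolic_powr_fun \<Longrightarrow> (\<lambda>x. exp (f x)) \<in> hyperbolic_powr_fun"

lemma deriv_closed_on_hyperbolic_powr_fun: "deriv_closed_on {0<..} hyperbolic_powr_fun"
  unfolding deriv_closed_on_def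
proof
  fix f assume "f \<in> hyperbolic_powr_fun"
  then show "\<exists>f'\<in>hyperbolic_powr_fun. \<forall>x\<in>{0<..}. (f has_real_derivative f' x) (at x)"
  proof induction
    case (const c)
    show ?case by (rule bexI[of _ "\<lambda>x. 0"]) (auto intro: hyperbolic_powr_fun.const)
  next
    case (powr p)
    show ?case
      by (rule bexI[of _ "\<lambda>x. p * x powr (p - 1)"])
         (auto intro: hyperbolic_powr_fun.intros has_real_derivative_powr)
  next
    case (cosh l)
    show ?case
      by (rule bexI[of _ "\<lambda>x. sinh (l * x) * l"])
         (auto intro!: derivative_eq_intros hyperbolic_powr_fun.intros)
  next
    case (sinh l)
    show ?case
      by (rule bexI[of _ "\<lambda>x. cosh (l * x) * l"])
         (auto intro!: derivative_eq_intros hyperbolic_powr_fun.intros)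
  next
    case (integral_cosh p l)
    have "continuous_on UNIV (\<lambda>u. cosh (l * u))"
      by (intro continuous_intros)
    from has_real_derivative_integral_mult_powr[OF this integral_cosh] show ?case
      by (intro bexI[of _ "\<lambda>x. cosh (l * x) * x powr p"]) (auto intro: hyperbolic_powr_fun.intros)
  next
    case (integral_sinh p l)
    have "continuous_on UNIV (\<lambda>u. sinh (l * u))"
      by (intro continuous_intros)
    from has_real_derivative_integral_mult_powr[OF this integral_sinh] show ?case
      by (intro bexI[of _ "\<lambda>x. sinh (l * x) * x powr p"]) (auto intro: hyperbolic_powr_fun.intros)
  next
    case (add f g)
    then obtain f' g' where "f' \<in> hyperbolic_powr_fun" "g' \<in> hyperbolic_powr_fun"
      "\<forall>x>0. (f has_real_derivative f' x) (at x)" "\<forall>x>0. (g has_real_derivative g' x) (at x)"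
      by auto
    then show ?case
      by (intro bexI[of _ "\<lambda>x. f' x + g' x"]) (auto intro: hyperbolic_powr_fun.intros DERIV_add)
  next
    case (mult f g)
    then obtain f' g' where "f' \<in> hyperbolic_powr_fun" "g' \<in> hyperbolic_powr_fun"
      "\<forall>x>0. (f has_real_derivative f' x) (at x)" "\<forall>x>0. (g has_real_derivative g' x) (at x)"
      by auto
    with mult.hyps show ?case
      by (intro bexI[of _ "\<lambda>x. f' x * g x + g' x * f x"]) (auto intro: hyperbolic_powr_fun.intros DERIV_mult)
  next
    case (exp f)
    then obtain f' where "f' \<in> hyperbolic_powr_fun" "\<forall>x>0. (f has_real_derivative f' x) (at x)"
      by auto
    with exp.hyps show ?case
      by (intro bexI[of _ "\<lambda>x. exp (f x) * f' x"])
         (auto intro: hyperbolic_powr_fun.intros DERIV_exp[THEN DERIV_chain2])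
  qed
qed

lemma integral_cosh_diff_mult_powr:
  fixes lam t p :: real
  assumes p: "p > -1" and t: "0 \<le> t"
  shows "integral {0..t} (\<lambda>u. cosh (lam * (t - u)) * u powr p)
       = cosh (lam * t) * integral {0..t} (\<lambda>u. cosh (lam * u) * u powr p)
       - sinh (lam * t) * integral {0..t} (\<lambda>u. sinh (lam * u) * u powr p)"
proof -
  have "(\<lambda>u. cosh (lam * u) * u powr p) integrable_on {0..t}"
       "(\<lambda>u. sinh (lam * u) * u powr p) integrable_on {0..t}"
    by (intro integrable_on_mult_powr continuous_intros p t)+
  then have "integral {0..t} (\<lambda>u. cosh (lam * t) * (cosh (lam * u) * u powr p)
                             - sinh (lam * t) * (sinh (lam * u) * u powr p))
      = cosh (lam * t) * integral {0..t} (\<lambda>u. cosh (lam * u) * u powr p)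
      - sinh (lam * t) * integral {0..t} (\<lambda>u. sinh (lam * u) * u powr p)"
    by (simp add: integral_diff integrable_on_mult_right)
  moreover have "cosh (lam * (t - u)) * u powr p
      = cosh (lam * t) * (cosh (lam * u) * u powr p) - sinh (lam * t) * (sinh (lam * u) * u powr p)"
    for u
    by (simp add: right_diff_distrib cosh_diff algebra_simps)
  ultimately show ?thesis by simp
qed

lemma integral_cosh_shift_minus_one_mult_powr_bounds:
  fixes lam t p :: real
  assumes p: "p > -1" and t: "0 \<le> t"
  defines "K \<equiv> integral {0..t} (\<lambda>u. (cosh (lam * (t - u)) - 1) * u powr p)"
  shows "0 \<le> K" and "K \<le> (cosh (lam * t) - 1) * (t powr (p + 1) / (p + 1))"
proof -
  have powr_int: "((\<lambda>u. u powr p) has_integral t powr (p + 1) / (p + 1)) {0..t}"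
    by (rule has_integral_powr_from_0[OF p t])
  have K_int: "(\<lambda>u. (cosh (lam * (t - u)) - 1) * u powr p) integrable_on {0..t}"
    by (intro integrable_on_mult_powr continuous_intros p t)
  have "integral {0..t} (\<lambda>u. 0) \<le> K"
    unfolding K_def by (rule integral_le[OF _ K_int]) (auto simp: cosh_real_ge_1)
  then show "0 \<le> K" by simp
  have "cosh (lam * (t - u)) \<le> cosh (lam * t)" if "u \<in> {0..t}" for u
  proof -
    have "\<bar>lam * (t - u)\<bar> \<le> \<bar>lam * t\<bar>"
      using that by (auto simp: abs_mult intro: mult_left_mono)
    then show ?thesis
      by (subst (1 2) cosh_real_abs[symmetric], subst cosh_real_nonneg_le_iff) auto
  qed
  then have "K \<le> integral {0..t} (\<lambda>u. (cosh (lam * t) - 1) * u powr p)"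
    unfolding K_def
    by (intro integral_le[OF K_int] integrable_on_mult_right has_integral_integrable[OF powr_int])
       (auto intro: mult_right_mono)
  then show "K \<le> (cosh (lam * t) - 1) * (t powr (p + 1) / (p + 1))"
    using integral_unique[OF powr_int] by simp
qed

lemma integral_cosh_shift_minus_one_mult_powr_smallo:
  fixes lam p :: real
  assumes p: "p > -1"
  shows "(\<lambda>t. integral {0..t} (\<lambda>u. (cosh (lam * (t - u)) - 1) * u powr p))
         \<in> o[at_right 0](\<lambda>t. t powr (p + 1))"
proof (rule landau_o.big_small_trans)
  show "(\<lambda>t. integral {0..t} (\<lambda>u. (cosh (lam * (t - u)) - 1) * u powr p))
      \<in> O[at_right 0](\<lambda>t. (cosh (lam * t) - 1) * t powr (p + 1))"
  proof (rule bigoI)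
    show "eventually (\<lambda>t. norm (integral {0..t} (\<lambda>u. (cosh (lam * (t - u)) - 1) * u powr p))
        \<le> 1 / (p + 1) * norm ((cosh (lam * t) - 1) * t powr (p + 1))) (at_right 0)"
      using eventually_at_right_less[of 0]
    proof eventually_elim
      case (elim t)
      then show ?case
        using integral_cosh_shift_minus_one_mult_powr_bounds[OF p, of t lam] p cosh_real_ge_1[of "lam * t"]
        by (simp add: abs_mult)
    qed
  qed
  show "(\<lambda>t. (cosh (lam * t) - 1) * t powr (p + 1)) \<in> o[at_right 0](\<lambda>t. t powr (p + 1))"
    using p by real_asymp
qed

lemma R_Y_eq_integral:
  fixes H lam \<theta> \<tau> :: real
  assumes H: "0 < H" and \<tau>: "0 \<le> \<tau>"
  shows "R_Y H lam \<theta> \<tau> = \<theta>\<^sup>2 * (Gamma (2*H + 1) * cosh (lam * \<tau>) / (2 * lam powr (2*H))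
      - H * integral {0..\<tau>} (\<lambda>u. cosh (lam * (\<tau> - u)) * u powr (2*H - 1)))"
proof -
  have "continuous_on UNIV (\<lambda>u. cosh (lam * (\<tau> - u)))"
    by (intro continuous_intros)
  from interval_integral_mult_powr[OF this _ \<tau>, of "2*H - 1"] H show ?thesis
    by (simp add: R_Y_def)
qed

lemma R_Z_eq_hyperbolic_powr_fun:
  fixes H lam \<theta> a :: real
  assumes H: "0 < H"
  shows "\<exists>f\<in>hyperbolic_powr_fun. \<forall>\<tau>\<in>{0<..}. R_Z H lam \<theta> a \<tau> = f \<tau>"
proof -
  define E where "E = exp (a\<^sup>2 * R_Y H lam \<theta> 0)"
  define A where "A \<tau> = integral {0..\<tau>} (\<lambda>u. cosh (lam * u) * u powr (2*H - 1))" for \<tau>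
  define B where "B \<tau> = integral {0..\<tau>} (\<lambda>u. sinh (lam * u) * u powr (2*H - 1))" for \<tau>
  define K where "K \<tau> = a\<^sup>2 * \<theta>\<^sup>2 * Gamma (2*H + 1) / (2 * lam powr (2*H)) * cosh (lam * \<tau>)
      + - (a\<^sup>2 * \<theta>\<^sup>2 * H) * (cosh (lam * \<tau>) * A \<tau>) + a\<^sup>2 * \<theta>\<^sup>2 * H * (sinh (lam * \<tau>) * B \<tau>)"
    for \<tau>
  have p: "2*H - 1 > -1" using H by simp
  have "K \<in> hyperbolic_powr_fun"
    unfolding K_def[abs_def] A_def B_def by (intro hyperbolic_powr_fun.intros p)
  then have "(\<lambda>\<tau>. E * exp (K \<tau>) + - E) \<in> hyperbolic_powr_fun"
    by (intro hyperbolic_powr_fun.intros)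
  moreover have "R_Z H lam \<theta> a \<tau> = E * exp (K \<tau>) + - E" if "\<tau> > 0" for \<tau>
  proof -
    have "a\<^sup>2 * R_Y H lam \<theta> \<tau> = K \<tau>"
      using that unfolding R_Y_eq_integral[OF H less_imp_le[OF that]] K_def A_def B_def
        integral_cosh_diff_mult_powr[OF p less_imp_le[OF that]]
      by (simp add: algebra_simps)
    then show ?thesis by (simp add: R_Z_def E_def algebra_simps)
  qed
  ultimately show ?thesis by auto
qed

lemma R_Y_eq_cosh_minus_integral:
  fixes H lam \<theta> \<tau> :: real
  assumes H: "0 < H" and \<tau>: "0 \<le> \<tau>"
  shows "R_Y H lam \<theta> \<tau> = R_Y H lam \<theta> 0 * cosh (lam * \<tau>) - \<theta>\<^sup>2 / 2 * \<tau> powr (2*H)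
      - \<theta>\<^sup>2 * H * integral {0..\<tau>} (\<lambda>u. (cosh (lam * (\<tau> - u)) - 1) * u powr (2*H - 1))"
proof -
  have p: "2*H - 1 > -1" using H by simp
  have powr_int: "((\<lambda>u. u powr (2*H - 1)) has_integral \<tau> powr (2*H) / (2*H)) {0..\<tau>}"
    using has_integral_powr_from_0[OF p \<tau>] by simp
  have "(\<lambda>u. (cosh (lam * (\<tau> - u)) - 1) * u powr (2*H - 1)) integrable_on {0..\<tau>}"
    by (intro integrable_on_mult_powr continuous_intros p \<tau>)
  from has_integral_add[OF integrable_integral[OF this] powr_int]
  have "integral {0..\<tau>} (\<lambda>u. cosh (lam * (\<tau> - u)) * u powr (2*H - 1))
      = integral {0..\<tau>} (\<lambda>u. (cosh (lam * (\<tau> - u)) - 1) * u powr (2*H - 1)) + \<tau> powr (2*H) / (2*H)"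
    by (simp add: algebra_simps integral_unique)
  then show ?thesis
    using H unfolding R_Y_eq_integral[OF H \<tau>] R_Y_eq_integral[OF H order_refl]
    by (simp add: algebra_simps diff_divide_distrib)
qed

lemma R_Y_expansion:
  fixes H lam \<theta> :: real
  assumes H: "0 < H" "H < 1"
  shows "(\<lambda>\<tau>. R_Y H lam \<theta> \<tau> - (R_Y H lam \<theta> 0 - \<theta>\<^sup>2 / 2 * \<tau> powr (2*H)))
         \<in> o[at_right 0](\<lambda>\<tau>. \<tau> powr (2*H))"
proof -
  define K where "K \<tau> = integral {0..\<tau>} (\<lambda>u. (cosh (lam * (\<tau> - u)) - 1) * u powr (2*H - 1))"
    for \<tau>
  have "K \<in> o[at_right 0](\<lambda>\<tau>. \<tau> powr (2*H))"
    using integral_cosh_shift_minus_one_mult_powr_smallo[of "2*H - 1" lam] H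
    unfolding K_def[abs_def] by simp
  moreover have "(\<lambda>\<tau>. cosh (lam * \<tau>) - 1) \<in> o[at_right 0](\<lambda>\<tau>. \<tau> powr (2*H))"
  proof (rule landau_o.big_small_trans)
    show "(\<lambda>\<tau>. cosh (lam * \<tau>) - 1) \<in> O[at_right 0](\<lambda>\<tau>. \<tau>\<^sup>2)"
      by real_asymp
    show "(\<lambda>\<tau>::real. \<tau>\<^sup>2) \<in> o[at_right 0](\<lambda>\<tau>. \<tau> powr (2*H))"
      using H by real_asymp
  qed
  ultimately have small: "(\<lambda>\<tau>. R_Y H lam \<theta> 0 * (cosh (lam * \<tau>) - 1) - \<theta>\<^sup>2 * H * K \<tau>)
      \<in> o[at_right 0](\<lambda>\<tau>. \<tau> powr (2*H))"
    by (intro sum_in_smallo(2)) simp_all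
  have "eventually (\<lambda>\<tau>. R_Y H lam \<theta> 0 * (cosh (lam * \<tau>) - 1) - \<theta>\<^sup>2 * H * K \<tau>
      = R_Y H lam \<theta> \<tau> - (R_Y H lam \<theta> 0 - \<theta>\<^sup>2 / 2 * \<tau> powr (2*H))) (at_right 0)"
    using eventually_at_right_less[of 0]
  proof eventually_elim
    case (elim \<tau>)
    show ?case
      unfolding R_Y_eq_cosh_minus_integral[OF H(1) less_imp_le[OF elim], of lam \<theta>] K_def
      by (simp add: algebra_simps)
  qed
  from landau_o.small.in_cong[OF this] small show ?thesis
    by simp
qed

lemma R_Z_expansion:
  fixes H lam \<theta> a :: real
  assumes H: "0 < H" "H < 1"
  shows "(\<lambda>\<tau>. R_Z H lam \<theta> a \<tau> - (exp (a\<^sup>2 * R_Y H lam \<theta> 0) * (exp (a\<^sup>2 * R_Y H lam \<theta> 0) - 1)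
           - a\<^sup>2 * \<theta>\<^sup>2 / 2 * exp (2 * a\<^sup>2 * R_Y H lam \<theta> 0) * \<tau> powr (2*H)))
         \<in> o[at_right 0](\<lambda>\<tau>. \<tau> powr (2*H))"
proof -
  define E where "E = exp (a\<^sup>2 * R_Y H lam \<theta> 0)"
  have "(\<lambda>\<tau>. a\<^sup>2 * (R_Y H lam \<theta> \<tau> - (R_Y H lam \<theta> 0 - \<theta>\<^sup>2 / 2 * \<tau> powr (2*H))))
      \<in> o[at_right 0](\<lambda>\<tau>. \<tau> powr (2*H))"
    using R_Y_expansion[OF H] by simp
  then have "(\<lambda>\<tau>. a\<^sup>2 * R_Y H lam \<theta> \<tau> - (a\<^sup>2 * R_Y H lam \<theta> 0 - a\<^sup>2 * (\<theta>\<^sup>2 / 2) * \<tau> powr (2*H)))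
      \<in> o[at_right 0](\<lambda>\<tau>. \<tau> powr (2*H))"
    by (simp only: right_diff_distrib mult.assoc)
  moreover have "((\<lambda>\<tau>::real. \<tau> powr (2*H)) \<longlongrightarrow> 0) (at_right 0)"
    using H by real_asymp
  ultimately have "(\<lambda>\<tau>. exp (a\<^sup>2 * R_Y H lam \<theta> \<tau>) - (E - a\<^sup>2 * (\<theta>\<^sup>2 / 2) * E * \<tau> powr (2*H)))
      \<in> o[at_right 0](\<lambda>\<tau>. \<tau> powr (2*H))"
    unfolding E_def by (rule exp_smallo_expansion)
  then have "(\<lambda>\<tau>. E * (exp (a\<^sup>2 * R_Y H lam \<theta> \<tau>) - (E - a\<^sup>2 * (\<theta>\<^sup>2 / 2) * E * \<tau> powr (2*H))))
      \<in> o[at_right 0](\<lambda>\<tau>. \<tau> powr (2*H))"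
    by (simp add: E_def)
  moreover have "exp (2 * a\<^sup>2 * R_Y H lam \<theta> 0) = E * E"
    by (simp add: E_def flip: exp_add)
  then have "R_Z H lam \<theta> a \<tau> - (E * (E - 1) - a\<^sup>2 * \<theta>\<^sup>2 / 2 * exp (2 * a\<^sup>2 * R_Y H lam \<theta> 0) * \<tau> powr (2*H))
      = E * (exp (a\<^sup>2 * R_Y H lam \<theta> \<tau>) - (E - a\<^sup>2 * (\<theta>\<^sup>2 / 2) * E * \<tau> powr (2*H)))" for \<tau>
    unfolding R_Z_def E_def[symmetric] by (simp add: algebra_simps)
  ultimately show ?thesis
    unfolding E_def[symmetric] by (simp only:)
qed

theorem lemma3:
  fixes H lam \<theta> a :: real
  assumes "0 < H" "H < 1/2" "lam > 0" "\<theta> > 0" "a \<noteq> 0"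
  defines "c0 \<equiv> exp (a\<^sup>2 * R_Y H lam \<theta> 0) * (exp (a\<^sup>2 * R_Y H lam \<theta> 0) - 1)"
      and "c1 \<equiv> a\<^sup>2 * \<theta>\<^sup>2 / 2 * exp (2 * a\<^sup>2 * R_Y H lam \<theta> 0)"
  shows "(\<forall>k::nat. \<forall>x::real. x > 0 \<longrightarrow> ((deriv ^^ k) (R_Z H lam \<theta> a)) differentiable (at x))
       \<and> (\<lambda>\<tau>. R_Z H lam \<theta> a \<tau> - (c0 - c1 * \<tau> powr (2*H))) \<in> o[at_right 0](\<lambda>\<tau>. \<tau> powr (2*H))"
proof
  obtain f where "f \<in> hyperbolic_powr_fun" "\<forall>\<tau>\<in>{0<..}. R_Z H lam \<theta> a \<tau> = f \<tau>"
    using R_Z_eq_hyperbolic_powr_fun[OF assms(1)] by blast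
  then show "\<forall>k x. x > 0 \<longrightarrow> ((deriv ^^ k) (R_Z H lam \<theta> a)) differentiable (at x)"
    using deriv_closed_on_higher_deriv_differentiable[OF deriv_closed_on_hyperbolic_powr_fun] by simp
  show "(\<lambda>\<tau>. R_Z H lam \<theta> a \<tau> - (c0 - c1 * \<tau> powr (2*H))) \<in> o[at_right 0](\<lambda>\<tau>. \<tau> powr (2*H))"
    unfolding c0_def c1_def by (rule R_Z_expansion) (use assms in auto)
qed

end
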